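(* For every session type $T$ (in the syntax described in the context), the set of bottom-up subterms of $T$ satisfies $|\mathrm{Sub}_{BU}(T)| \leq |T|$, where $|\mathrm{Sub}_{BU}(T)|$ is the cardinality of this set and $|T|$ is the size of $T$.
   Context: Session types (possibly containing free variables) are given by the grammar $T ::= \mathsf{end} \mid X \mid \mu X.T \mid {?}[T_1,\dots,T_n].S \mid {!}[T_1,\dots,T_n].S \mid \&\langle l_1:T_1,\dots,l_n:T_n\rangle \mid \oplus\langle l_1:T_1,\dots,l_n:T_n\rangle$ (input, output, branch, select), where $X$ ranges over type variables and $l_i$ over labels. Types are identified up to $\alpha$-conversion of bound variables, and all substitutions $T[Q/X]$ are capture-avoiding. The size $|T|$ is the number of constructors (nodes) of $T$: $|\mathsf{end}| = |X| = 1$, $|\mu X.T| = 1 + |T|$, $|\&\langle l_i:T_i\rangle_{1\le i\le n}| = |\oplus\langle l_i:T_i\rangle_{1\le i\le n}| = 1 + \sum_{i=1}^n |T_i|$, and $|{?}[T_1,\dots,T_n].S| = |{!}[T_1,\dots,T_n].S| = 1 + \sum_{i=1}^n|T_i| + |S|$. The set of bottom-up subterms $\mathrm{Sub}_{BU}(T)$ is defined by recursion on $T$: $\mathrm{Sub}_{BU}(\mathsf{end}) = \{\mathsf{end}\}$; $\mathrm{Sub}_{BU}(X) = \{X\}$; $\mathrm{Sub}_{BU}(\mu X.T') = \{\mu X.T'\} \cup \{S[\mu X.T'/X] \mid S \in \mathrm{Sub}_{BU}(T')\}$; $\mathrm{Sub}_{BU}(\&\langle l_i:T_i\rangle_{i})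 = \{\&\langle l_i:T_i\rangle_i\} \cup \bigcup_i \mathrm{Sub}_{BU}(T_i)$, and likewise for $\oplus$; $\mathrm{Sub}_{BU}({?}[T_1,\dots,T_n].S) = \{{?}[T_1,\dots,T_n].S\} \cup \bigcup_i \mathrm{Sub}_{BU}(T_i) \cup \mathrm{Sub}_{BU}(S)$, and likewise for ${!}$. *)

theory Defs
  imports Main
begin

text \<open>Session types up to alpha-conversion, represented with de Bruijn indices:
  Var i refers to the i-th enclosing Mu binder (free if i exceeds the binder depth).\<close>

datatype 'l stype =
    End
  | Var nat
  | Mu "'l stype"
  | In "'l stype list" "'l stype"
  | Out "'l stype list" "'l stype"
  | Branch "('l \<times> 'l stype) list"
  | Select "('l \<times> 'l stype) list"

fun lift :: "nat \<Rightarrow> 'l stype \<Rightarrow> 'l stype" where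
  "lift k End = End"
| "lift k (Var i) = (if i < k then Var i else Var (Suc i))"
| "lift k (Mu t) = Mu (lift (Suc k) t)"
| "lift k (In ts s) = In (map (lift k) ts) (lift k s)"
| "lift k (Out ts s) = Out (map (lift k) ts) (lift k s)"
| "lift k (Branch ls) = Branch (map (\<lambda>p. (fst p, lift k (snd p))) ls)"
| "lift k (Select ls) = Select (map (\<lambda>p. (fst p, lift k (snd p))) ls)"

text \<open>Capture-avoiding substitution: subst k u t replaces the variable with index k
  (the variable bound by the removed binder) by u, and decrements indices above k.\<close>
fun subst :: "nat \<Rightarrow> 'l stype \<Rightarrow> 'l stype \<Rightarrow> 'l stype" where
  "subst k u End = End"
| "subst k u (Var i) = (if i < k then Var i else if i = k then u else Var (i - 1))"
| "subst k u (Mu t) = Mu (subst (Suc k) (lift 0 u) t)"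
| "subst k u (In ts s) = In (map (subst k u) ts) (subst k u s)"
| "subst k u (Out ts s) = Out (map (subst k u) ts) (subst k u s)"
| "subst k u (Branch ls) = Branch (map (\<lambda>p. (fst p, subst k u (snd p))) ls)"
| "subst k u (Select ls) = Select (map (\<lambda>p. (fst p, subst k u (snd p))) ls)"

fun tsize :: "'l stype \<Rightarrow> nat" where
  "tsize End = 1"
| "tsize (Var i) = 1"
| "tsize (Mu t) = 1 + tsize t"
| "tsize (In ts s) = 1 + sum_list (map tsize ts) + tsize s"
| "tsize (Out ts s) = 1 + sum_list (map tsize ts) + tsize s"
| "tsize (Branch ls) = 1 + sum_list (map (\<lambda>p. tsize (snd p)) ls)"
| "tsize (Select ls) = 1 + sum_list (map (\<lambda>p. tsize (snd p)) ls)"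

fun subBU :: "'l stype \<Rightarrow> 'l stype set" where
  "subBU End = {End}"
| "subBU (Var i) = {Var i}"
| "subBU (Mu t) = insert (Mu t) ((\<lambda>S. subst 0 (Mu t) S) ` subBU t)"
| "subBU (In ts s) = insert (In ts s) ((\<Union>t\<in>set ts. subBU t) \<union> subBU s)"
| "subBU (Out ts s) = insert (Out ts s) ((\<Union>t\<in>set ts. subBU t) \<union> subBU s)"
| "subBU (Branch ls) = insert (Branch ls) (\<Union>p\<in>set ls. subBU (snd p))"
| "subBU (Select ls) = insert (Select ls) (\<Union>p\<in>set ls. subBU (snd p))"

end

theory Submission
  imports Defs
begin

text \<open>Induction on T: every clause of the definition of bottom-up subterms adds only T itself
  to the subterms of its immediate components, and unfolding at a binder maps the subterms of
  the body through a function, which cannot increase their number. Since the size also counts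
  one node for T plus the sizes of the components, the bound propagates.\<close>

lemma card_insert_le_Suc: "card (insert x A) \<le> Suc (card A)"
  by (cases "finite A") (auto simp: card_insert_if)

lemma card_UN_set_le_sum_list:
  fixes g :: "'a \<Rightarrow> nat"
  assumes "\<And>x. x \<in> set xs \<Longrightarrow> card (A x) \<le> g x"
  shows "card (\<Union>x\<in>set xs. A x) \<le> (\<Sum>x\<leftarrow>xs. g x)"
  using assms
proof (induction xs)
  case (Cons x xs)
  have "card (\<Union>y\<in>set (x # xs). A y) \<le> card (A x) + card (\<Union>y\<in>set xs. A y)"
    using card_Un_le by simp
  with Cons show ?case by fastforce
qed simp

lemma card_insert_UN_le:
  fixes g :: "'a \<Rightarrow> nat"
  assumes "\<And>x. x \<in> set xs \<Longrightarrow> card (A x) \<le> g x"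
  shows "card (insert y (\<Union>x\<in>set xs. A x)) \<le> 1 + (\<Sum>x\<leftarrow>xs. g x)"
proof -
  have "card (insert y (\<Union>x\<in>set xs. A x)) \<le> Suc (card (\<Union>x\<in>set xs. A x))"
    by (rule card_insert_le_Suc)
  also have "\<dots> \<le> 1 + (\<Sum>x\<leftarrow>xs. g x)"
    using card_UN_set_le_sum_list[of xs A g] assms by simp
  finally show ?thesis .
qed

lemma card_insert_UN_Un_le:
  fixes g :: "'a \<Rightarrow> nat"
  assumes "\<And>x. x \<in> set xs \<Longrightarrow> card (A x) \<le> g x" and "card B \<le> n"
  shows "card (insert y ((\<Union>x\<in>set xs. A x) \<union> B)) \<le> 1 + (\<Sum>x\<leftarrow>xs. g x) + n"
proof -
  have "card (insert y ((\<Union>x\<in>set xs. A x) \<union> B)) \<le> Suc (card ((\<Union>x\<in>set xs. A x) \<union> B))"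
    by (rule card_insert_le_Suc)
  also have "\<dots> \<le> Suc (card (\<Union>x\<in>set xs. A x) + card B)"
    using card_Un_le by simp
  also have "\<dots> \<le> 1 + (\<Sum>x\<leftarrow>xs. g x) + n"
    using card_UN_set_le_sum_list[of xs A g] assms by simp
  finally show ?thesis .
qed

lemma finite_subBU: "finite (subBU T)"
  by (induction T rule: subBU.induct) auto

theorem mainTheorem1:
  fixes T :: "'l stype"
  shows "card (subBU T) \<le> tsize T"
proof (induction T rule: subBU.induct)
  case (3 t)
  have "card (subBU (Mu t)) \<le> Suc (card (subst 0 (Mu t) ` subBU t))"
    by (simp add: card_insert_le_Suc)
  also have "\<dots> \<le> Suc (card (subBU t))"
    using card_image_le[OF finite_subBU] by simp
  finally show ?case using 3 by simp
next
  case (4 ts s)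
  show ?case unfolding subBU.simps tsize.simps
    by (rule card_insert_UN_Un_le) (use 4 in auto)
next
  case (5 ts s)
  show ?case unfolding subBU.simps tsize.simps
    by (rule card_insert_UN_Un_le) (use 5 in auto)
next
  case (6 ls)
  show ?case unfolding subBU.simps tsize.simps
    by (rule card_insert_UN_le) (use 6 in auto)
next
  case (7 ls)
  show ?case unfolding subBU.simps tsize.simps
    by (rule card_insert_UN_le) (use 7 in auto)
qed auto

end
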